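(* The inverse of $T$ (defined on the range of $T$) is unbounded, i.e. there is no constant $C<\infty$ with $\|\rho\|_{\ell^2(\mathbb{Z}^2)}\leq C\|T\rho\|_{L^2(\mathbb{Z}\times[-\pi,\pi])}$ for all $\rho\in\ell^2(\mathbb{Z}\times\mathbb{Z})$.
   Context: Fix a complex number $g_\omega\neq 0$ (coupling constant). For $\theta\in[-\pi,\pi]$ let $U_\omega(\theta)$ be the unitary operator on $\ell^2(\mathbb{Z})$ with matrix entries $(U_\omega(\theta))_{k,l}=e^{\mathrm{i}(k-l)\theta}J_{k-l}(2|g_\omega|)$, $k,l\in\mathbb{Z}$, where $J_n$ is the Bessel function of the first kind of order $n$. The forward operator $T:\ell^2(\mathbb{Z}\times\mathbb{Z})\to L^2(\mathbb{Z}\times[-\pi,\pi])$ (the target space carries counting measure times Lebesgue measure) is the bounded linear operator $$(T\rho)(l,\theta)=\big(U_\omega(\theta)\rho\,U_\omega(\theta)^*\big)_{l,l}=\sum_{m,n\in\mathbb{Z}}e^{\mathrm{i}(l-m)\theta}J_{l-m}(2|g_\omega|)\,\rho_{m,n}\,e^{-\mathrm{i}(l-n)\theta}J_{l-n}(2|g_\omega|),$$ where a matrix $\rho=(\rho_{j,k})_{j,k\in\mathbb{Z}}\in\ell^2(\mathbb{Z}\times\mathbb{Z})$ is identified with a Hilbert–Schmidt operator on $\ell^2(\mathbb{Z})$. *)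

theory Defs
  imports "HOL-Analysis.Analysis"
begin

definition bessel_J_nat :: "nat \<Rightarrow> real \<Rightarrow> real" where
  "bessel_J_nat n x = (\<Sum>k. (-1) ^ k / (fact k * fact (k + n)) * (x / 2) ^ (2 * k + n))"

definition bessel_J :: "int \<Rightarrow> real \<Rightarrow> real" where
  "bessel_J n x = (if n \<ge> 0 then bessel_J_nat (nat n) x
                   else (-1) ^ (nat (- n)) * bessel_J_nat (nat (- n)) x)"

definition U_entry :: "complex \<Rightarrow> real \<Rightarrow> int \<Rightarrow> int \<Rightarrow> complex" where
  "U_entry g \<theta> k l = cis (of_int (k - l) * \<theta>) * complex_of_real (bessel_J (k - l) (2 * cmod g))"

definition l2_ZZ :: "(int \<times> int \<Rightarrow> complex) set" where
  "l2_ZZ = {\<rho>. (\<lambda>p. (cmod (\<rho> p))\<^sup>2) summable_on UNIV}"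

definition l2_normsq :: "(int \<times> int \<Rightarrow> complex) \<Rightarrow> ennreal" where
  "l2_normsq \<rho> = (\<Sum>\<^sub>\<infinity>p. ennreal ((cmod (\<rho> p))\<^sup>2))"

text \<open>The forward operator: (T rho)(l,theta) = (U rho U^*)_{l,l}.\<close>
definition T_op :: "complex \<Rightarrow> (int \<times> int \<Rightarrow> complex) \<Rightarrow> int \<Rightarrow> real \<Rightarrow> complex" where
  "T_op g \<rho> l \<theta> = (\<Sum>\<^sub>\<infinity>(m, n). U_entry g \<theta> l m * \<rho> (m, n) * cnj (U_entry g \<theta> l n))"

definition L2_normsq :: "(int \<Rightarrow> real \<Rightarrow> complex) \<Rightarrow> ennreal" where
  "L2_normsq f = (\<Sum>\<^sub>\<infinity>l. \<integral>\<^sup>+ \<theta>. ennreal ((cmod (f l \<theta>))\<^sup>2) * indicator {-pi..pi} \<theta> \<partial>lborel)"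

end

theory Submission
  imports Defs
begin

text \<open>
  Test the inequality on the matrix unit \<open>\<rho>\<close> at \<open>(0, k)\<close>, which has norm 1. Its image
  \<open>(T \<rho>)(l, \<theta>) = U(\<theta>)\<^sub>l\<^sub>,\<^sub>0 \<cdot> conj U(\<theta>)\<^sub>l\<^sub>,\<^sub>k\<close> has squared modulus \<open>J\<^sub>l(x)\<^sup>2 J\<^sub>l\<^sub>-\<^sub>k(x)\<^sup>2\<close>
  with \<open>x = 2|g|\<close>, so \<open>\<parallel>T \<rho>\<parallel>\<^sup>2 = 2\<pi> \<Sum>\<^sub>l J\<^sub>l(x)\<^sup>2 J\<^sub>l\<^sub>-\<^sub>k(x)\<^sup>2\<close>. The power series gives
  \<open>|J\<^sub>n(2a)| \<le> exp(a\<^sup>2) a\<^sup>n / n!\<close>, so \<open>l \<mapsto> J\<^sub>l(x)\<^sup>2\<close> is summable over \<open>\<int>\<close> and its tails are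
  small. For a large shift \<open>k\<close> one factor of every product \<open>J\<^sub>l(x)\<^sup>2 J\<^sub>l\<^sub>-\<^sub>k(x)\<^sup>2\<close> lies in a
  tail, so \<open>\<parallel>T \<rho>\<parallel>\<close> becomes arbitrarily small while \<open>\<parallel>\<rho>\<parallel> = 1\<close>.
\<close>

lemma finite_superlevel_set_summable_on:
  fixes f :: "'a \<Rightarrow> real"
  assumes summable: "f summable_on A" and nonneg: "\<And>x. x \<in> A \<Longrightarrow> 0 \<le> f x" and "0 < \<eta>"
  shows "finite {x \<in> A. \<eta> < f x}"
proof (rule ccontr)
  assume infinite: "infinite {x \<in> A. \<eta> < f x}"
  obtain n :: nat where n: "infsum f A < of_nat n * \<eta>"
    using ex_less_of_nat_mult[OF \<open>0 < \<eta>\<close>] by blast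
  obtain F where F: "finite F" "card F = n" "F \<subseteq> {x \<in> A. \<eta> < f x}"
    using infinite_arbitrarily_large[OF infinite] by blast
  have "of_nat n * \<eta> = (\<Sum>x\<in>F. \<eta>)" using F(2) by simp
  also have "\<dots> \<le> sum f F" using F(3) by (intro sum_mono) auto
  also have "\<dots> \<le> infsum f A"
    using F by (intro finite_sum_le_infsum summable) (auto intro: nonneg)
  finally show False using n by simp
qed

lemma summable_on_int_eventually_le:
  fixes f :: "int \<Rightarrow> real"
  assumes "f summable_on UNIV" "\<And>l. 0 \<le> f l" "0 < \<eta>"
  obtains N :: nat where "\<And>l. N \<le> nat \<bar>l\<bar> \<Longrightarrow> f l \<le> \<eta>"
proof -
  have "finite ((\<lambda>l. nat \<bar>l\<bar>) ` {l. \<eta> < f l})"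
    using finite_superlevel_set_summable_on[OF assms] by simp
  then obtain m where "\<And>l. \<eta> < f l \<Longrightarrow> nat \<bar>l\<bar> \<le> m"
    unfolding finite_nat_set_iff_bounded_le by blast
  then have "\<And>l. Suc m \<le> nat \<bar>l\<bar> \<Longrightarrow> f l \<le> \<eta>"
    by (meson not_less not_less_eq_eq)
  then show thesis by (rule that)
qed

lemma summable_on_int_nat_abs:
  fixes h :: "nat \<Rightarrow> real"
  assumes "summable h" "\<And>n. 0 \<le> h n"
  shows "(\<lambda>l::int. h (nat \<bar>l\<bar>)) summable_on UNIV"
proof -
  have h: "h summable_on UNIV" by (rule summable_nonneg_imp_summable_on[OF assms])
  have nonneg: "(\<lambda>l::int. h (nat \<bar>l\<bar>)) summable_on range int"
    by (subst summable_on_reindex) (use h in \<open>auto simp: o_def\<close>)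
  have nonpos: "(\<lambda>l::int. h (nat \<bar>l\<bar>)) summable_on range (\<lambda>n. - int n)"
    by (subst summable_on_reindex) (use h in \<open>auto simp: o_def inj_on_def\<close>)
  have "range int \<union> range (\<lambda>n. - int n) = UNIV"
  proof (intro set_eqI iffI)
    fix l :: int
    show "l \<in> range int \<union> range (\<lambda>n. - int n)"
      by (cases "0 \<le> l") (auto intro: image_eqI[of _ _ "nat \<bar>l\<bar>"])
  qed auto
  with summable_on_union[OF nonneg nonpos] show ?thesis by simp
qed

lemma autocorrelation_exists_shift_le:
  fixes f :: "int \<Rightarrow> real"
  assumes summable: "f summable_on UNIV" and nonneg: "\<And>l. 0 \<le> f l" and "0 < \<epsilon>"
  obtains k where "(\<lambda>l. f l * f (l - k)) summable_on UNIV" "(\<Sum>\<^sub>\<infinity>l. f l * f (l - k)) \<le> \<epsilon>"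
proof -
  define S where "S = infsum f UNIV"
  have "0 \<le> S" unfolding S_def by (rule infsum_nonneg) (rule nonneg)
  define \<eta> where "\<eta> = \<epsilon> / (2 * (S + 1))"
  have "0 < \<eta>" unfolding \<eta>_def using \<open>0 < \<epsilon>\<close> \<open>0 \<le> S\<close> by simp
  obtain N where small: "\<And>l. N \<le> nat \<bar>l\<bar> \<Longrightarrow> f l \<le> \<eta>"
    using summable_on_int_eventually_le[OF summable nonneg \<open>0 < \<eta>\<close>] by blast
  define k where "k = 2 * int N"
  \<comment> \<open>at least one of \<open>|l|\<close>, \<open>|l - k|\<close> is \<open>\<ge> N\<close>\<close>
  have product_le: "f l * f (l - k) \<le> \<eta> * (f l + f (l - k))" for l
  proof (cases "N \<le> nat \<bar>l\<bar>")
    case True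
    then have "f l * f (l - k) \<le> \<eta> * f (l - k)" by (intro mult_right_mono small nonneg)
    then show ?thesis using \<open>0 < \<eta>\<close> nonneg[of l]
      by (simp add: distrib_left add_increasing)
  next
    case False
    then have "N \<le> nat \<bar>l - k\<bar>" unfolding k_def by linarith
    then have "f l * f (l - k) \<le> f l * \<eta>" by (intro mult_left_mono small nonneg)
    then show ?thesis using \<open>0 < \<eta>\<close> nonneg[of "l - k"]
      by (simp add: distrib_left mult.commute add_increasing2)
  qed
  have shift: "bij_betw (\<lambda>l. l - k) UNIV UNIV"
    by (rule bij_betwI[where g="\<lambda>l. l + k"]) auto
  have shifted: "(\<lambda>l. f (l - k)) summable_on UNIV" "(\<Sum>\<^sub>\<infinity>l. f (l - k)) = S"
    using summable_on_reindex_bij_betw[OF shift, of f] infsum_reindex_bij_betw[OF shift, of f] summable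
    by (simp_all add: S_def)
  have bound: "(\<lambda>l. \<eta> * (f l + f (l - k))) summable_on UNIV"
    by (intro summable_on_cmult_right summable_on_add summable shifted)
  show thesis
  proof
    show products: "(\<lambda>l. f l * f (l - k)) summable_on UNIV"
      by (rule summable_on_comparison_test[OF bound]) (use product_le nonneg in auto)
    have "(\<Sum>\<^sub>\<infinity>l. f l * f (l - k)) \<le> (\<Sum>\<^sub>\<infinity>l. \<eta> * (f l + f (l - k)))"
      by (rule infsum_mono[OF products bound product_le])
    also have "\<dots> = \<eta> * (2 * S)"
      using summable shifted by (simp add: infsum_cmult_right' infsum_add S_def)
    also have "\<dots> \<le> \<epsilon>"
      unfolding \<eta>_def using \<open>0 \<le> S\<close> \<open>0 < \<epsilon>\<close> by (simp add: field_simps)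
    finally show "(\<Sum>\<^sub>\<infinity>l. f l * f (l - k)) \<le> \<epsilon>" .
  qed
qed

lemma bessel_J_nat_abs_le:
  fixes a :: real
  assumes "0 \<le> a"
  shows "\<bar>bessel_J_nat n (2 * a)\<bar> \<le> exp (a\<^sup>2) * (a ^ n / fact n)"
proof -
  define t where "t k = (-1) ^ k / (fact k * fact (k + n)) * ((2 * a) / 2) ^ (2 * k + n)" for k
  define u where "u k = (a ^ n / fact n) * ((a\<^sup>2) ^ k / fact k)" for k
  have u_sums: "u sums ((a ^ n / fact n) * exp (a\<^sup>2))"
    unfolding u_def using exp_converges[of "a\<^sup>2"]
    by (intro sums_mult) (simp add: divide_inverse mult.commute scaleR_conv_of_real)
  have t_le: "\<bar>t k\<bar> \<le> u k" for k
  proof -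
    have "\<bar>t k\<bar> = a ^ (2 * k + n) / (fact k * fact (k + n))"
      unfolding t_def using assms by (simp add: abs_mult power_abs)
    also have "\<dots> \<le> a ^ (2 * k + n) / (fact k * fact n)"
      by (intro divide_left_mono mult_left_mono) (auto simp: fact_mono assms intro!: mult_pos_pos)
    also have "\<dots> = u k"
      unfolding u_def by (simp add: power_add power_mult field_simps power2_eq_square)
    finally show ?thesis .
  qed
  have abs_summable: "summable (\<lambda>k. \<bar>t k\<bar>)"
    by (rule summable_comparison_test[OF _ sums_summable[OF u_sums]]) (use t_le in auto)
  have "\<bar>bessel_J_nat n (2 * a)\<bar> = \<bar>suminf t\<bar>" unfolding bessel_J_nat_def t_def by simp
  also have "\<dots> \<le> (\<Sum>k. \<bar>t k\<bar>)" by (rule summable_rabs[OF abs_summable])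
  also have "\<dots> \<le> suminf u" by (rule suminf_le[OF t_le abs_summable sums_summable[OF u_sums]])
  also have "\<dots> = exp (a\<^sup>2) * (a ^ n / fact n)" using sums_unique[OF u_sums] by (simp add: mult.commute)
  finally show ?thesis .
qed

lemma bessel_J_abs_le:
  fixes a :: real
  assumes "0 \<le> a"
  shows "\<bar>bessel_J n (2 * a)\<bar> \<le> exp (a\<^sup>2) * (a ^ nat \<bar>n\<bar> / fact (nat \<bar>n\<bar>))"
  using bessel_J_nat_abs_le[OF assms, of "nat \<bar>n\<bar>"]
  by (cases "0 \<le> n") (simp_all add: bessel_J_def abs_mult)

lemma summable_on_bessel_J_sq:
  fixes a :: real
  assumes "0 \<le> a"
  shows "(\<lambda>l. (bessel_J l (2 * a))\<^sup>2) summable_on UNIV"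
proof -
  define h where "h n = (exp (a\<^sup>2))\<^sup>2 * ((a\<^sup>2) ^ n / fact n)" for n
  have "summable h"
    unfolding h_def by (intro summable_mult) (use summable_exp[of "a\<^sup>2"] in \<open>simp add: field_simps\<close>)
  moreover have "(bessel_J l (2 * a))\<^sup>2 \<le> h (nat \<bar>l\<bar>)" for l
  proof -
    let ?n = "nat \<bar>l\<bar>"
    have "(bessel_J l (2 * a))\<^sup>2 \<le> (exp (a\<^sup>2) * (a ^ ?n / fact ?n))\<^sup>2"
      using power_mono[OF bessel_J_abs_le[OF assms, of l] abs_ge_zero, of 2] by simp
    also have "\<dots> = h ?n * (1 / fact ?n)"
      unfolding h_def by (simp add: power_mult_distrib power_divide power2_eq_square power_mult[symmetric])
    also have "\<dots> \<le> h ?n"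
      unfolding h_def by (intro mult_left_le) auto
    finally show ?thesis .
  qed
  ultimately show ?thesis
    by (intro summable_on_comparison_test[OF summable_on_int_nat_abs[of h]]) (auto simp: h_def)
qed

lemma ennreal_infsum:
  fixes f :: "'a \<Rightarrow> real"
  assumes "f summable_on A" "\<And>x. x \<in> A \<Longrightarrow> 0 \<le> f x"
  shows "ennreal (infsum f A) = (\<Sum>\<^sub>\<infinity>x\<in>A. ennreal (f x))"
proof -
  have "ennreal (infsum f A) = (SUP F\<in>{F. finite F \<and> F \<subseteq> A}. ennreal (sum f F))"
    by (rule infsum_nonneg_is_SUPREMUM_ennreal) (use assms in auto)
  also have "\<dots> = (SUP F\<in>{F. finite F \<and> F \<subseteq> A}. (\<Sum>x\<in>F. ennreal (f x)))"
    by (intro SUP_cong refl sum_ennreal[symmetric]) (use assms(2) in auto)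
  also have "\<dots> = (\<Sum>\<^sub>\<infinity>x\<in>A. ennreal (f x))"
    by (rule nonneg_infsum_complete[symmetric]) simp
  finally show ?thesis .
qed

definition matrix_unit :: "int \<times> int \<Rightarrow> int \<times> int \<Rightarrow> complex" where
  "matrix_unit p q = (if q = p then 1 else 0)"

lemma matrix_unit_in_l2_ZZ: "matrix_unit p \<in> l2_ZZ"
proof -
  have "(\<lambda>q. (cmod (matrix_unit p q))\<^sup>2) summable_on {p}" by simp
  then show ?thesis
    unfolding l2_ZZ_def by (subst (asm) summable_on_cong_neutral) (auto simp: matrix_unit_def)
qed

lemma l2_normsq_matrix_unit: "l2_normsq (matrix_unit p) = 1"
proof -
  have "l2_normsq (matrix_unit p) = (\<Sum>\<^sub>\<infinity>q\<in>{p}. ennreal ((cmod (matrix_unit p q))\<^sup>2))"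
    unfolding l2_normsq_def by (rule infsum_cong_neutral) (auto simp: matrix_unit_def)
  then show ?thesis by (simp add: matrix_unit_def)
qed

lemma T_op_matrix_unit:
  "T_op g (matrix_unit (m, n)) l \<theta> = U_entry g \<theta> l m * cnj (U_entry g \<theta> l n)"
proof -
  have "T_op g (matrix_unit (m, n)) l \<theta> =
      (\<Sum>\<^sub>\<infinity>(i, j)\<in>{(m, n)}. U_entry g \<theta> l i * matrix_unit (m, n) (i, j) * cnj (U_entry g \<theta> l j))"
    unfolding T_op_def by (rule infsum_cong_neutral) (auto simp: matrix_unit_def split: if_splits)
  then show ?thesis by (simp add: matrix_unit_def)
qed

lemma L2_normsq_T_op_matrix_unit:
  "L2_normsq (T_op g (matrix_unit (m, n))) =
     (\<Sum>\<^sub>\<infinity>l. ennreal (2 * pi * ((bessel_J (l - m) (2 * cmod g))\<^sup>2 * (bessel_J (l - n) (2 * cmod g))\<^sup>2)))"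
proof -
  have modulus: "(cmod (T_op g (matrix_unit (m, n)) l \<theta>))\<^sup>2 =
      (bessel_J (l - m) (2 * cmod g))\<^sup>2 * (bessel_J (l - n) (2 * cmod g))\<^sup>2" for l \<theta>
    unfolding T_op_matrix_unit U_entry_def by (simp add: norm_mult power_mult_distrib)
  show ?thesis
    unfolding L2_normsq_def modulus
    by (intro infsum_cong, subst nn_integral_cmult_indicator) (auto simp: ennreal_mult mult.commute)
qed

lemma L2_normsq_T_op_matrix_unit_le:
  assumes "0 < \<epsilon>"
  obtains k where "L2_normsq (T_op g (matrix_unit (0, k))) \<le> ennreal \<epsilon>"
proof -
  define f where "f l = (bessel_J l (2 * cmod g))\<^sup>2" for l
  have "f summable_on UNIV" unfolding f_def by (rule summable_on_bessel_J_sq) simp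
  moreover have "0 < \<epsilon> / (2 * pi)" using assms by simp
  ultimately obtain k where products: "(\<lambda>l. f l * f (l - k)) summable_on UNIV"
    and small: "(\<Sum>\<^sub>\<infinity>l. f l * f (l - k)) \<le> \<epsilon> / (2 * pi)"
    using autocorrelation_exists_shift_le[of f] by (auto simp: f_def)
  have "L2_normsq (T_op g (matrix_unit (0, k))) = (\<Sum>\<^sub>\<infinity>l. ennreal (2 * pi * (f l * f (l - k))))"
    unfolding L2_normsq_T_op_matrix_unit f_def by simp
  also have "\<dots> = ennreal (\<Sum>\<^sub>\<infinity>l. 2 * pi * (f l * f (l - k)))"
    by (rule ennreal_infsum[symmetric]) (use products in \<open>auto simp: f_def intro: summable_on_cmult_right\<close>)
  also have "\<dots> = ennreal (2 * pi * (\<Sum>\<^sub>\<infinity>l. f l * f (l - k)))"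
    by (simp only: infsum_cmult_right')
  also have "\<dots> \<le> ennreal \<epsilon>"
    using small by (intro ennreal_leI) (simp add: field_simps)
  finally show thesis by (rule that)
qed

theorem mainTheorem5:
  fixes g :: complex
  assumes "g \<noteq> 0"
  shows "\<not> (\<exists>C::real. \<forall>\<rho>\<in>l2_ZZ. l2_normsq \<rho> \<le> ennreal (C\<^sup>2) * L2_normsq (T_op g \<rho>))"
proof
  assume "\<exists>C::real. \<forall>\<rho>\<in>l2_ZZ. l2_normsq \<rho> \<le> ennreal (C\<^sup>2) * L2_normsq (T_op g \<rho>)"
  then obtain C :: real
    where bounded: "\<And>\<rho>. \<rho> \<in> l2_ZZ \<Longrightarrow> l2_normsq \<rho> \<le> ennreal (C\<^sup>2) * L2_normsq (T_op g \<rho>)"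
    by blast
  have "0 < C\<^sup>2 + 1" using zero_le_power2[of C] by linarith
  then obtain k where small: "L2_normsq (T_op g (matrix_unit (0, k))) \<le> ennreal (1 / (C\<^sup>2 + 1))"
    using L2_normsq_T_op_matrix_unit_le[of "1 / (C\<^sup>2 + 1)" g] by auto
  have "1 = l2_normsq (matrix_unit (0, k))" by (simp add: l2_normsq_matrix_unit)
  also have "\<dots> \<le> ennreal (C\<^sup>2) * L2_normsq (T_op g (matrix_unit (0, k)))"
    by (rule bounded[OF matrix_unit_in_l2_ZZ])
  also have "\<dots> \<le> ennreal (C\<^sup>2) * ennreal (1 / (C\<^sup>2 + 1))"
    by (rule mult_left_mono[OF small]) simp
  also have "\<dots> = ennreal (C\<^sup>2 / (C\<^sup>2 + 1))"
    by (simp add: ennreal_mult''[symmetric])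
  finally have "1 \<le> C\<^sup>2 / (C\<^sup>2 + 1)" by simp
  with \<open>0 < C\<^sup>2 + 1\<close> show False by (simp add: le_divide_eq)
qed

end
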